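(* Let $y_1,\dots,y_n\in\mathbb{R}^k$, $r\in\{1,\dots,n\}$, and let $\mathcal{A}_1,\dots,\mathcal{A}_m$ be a fixed partition of $\mathbb{R}^k$ into $m$ disjoint regions. For $R\in\mathrm{SO}(k)$, diagonal matrices $D_1,\dots,D_m\succcurlyeq 0$, exponents $p_1,\dots,p_m>0$ and $\mu\in\mathbb{R}^k$, define $$d(y,\mu;R,\{D_j\}_{j=1}^m)=\sum_{j=1}^m \mathds{1}\{R(y-\mu)\in\mathcal{A}_j\}\,\|RD_j(y-\mu)\|_{p_j},$$ and $V(\{p_j\},\{D_j\})=\frac{1}{m}\sum_{j=1}^m\lambda(B_{\|\cdot\|_{p_j}}(1))\det(D_j)^{-1}$. Consider $$\text{(A)}\quad \min\ V(\{p_j\},\{D_j\})\quad\text{s.t.}\ R\in\mathrm{SO}(k),\ \mu\in\mathbb{R}^k,\ D_j\in\mathrm{Diag}(k),\ D_j\succcurlyeq 0,\ p_j>0\ \forall j\in[m],\ \mathrm{Card}\{i\in[n]: d(y_i,\mu;R,\{D_j\})\le 1\}\ge n-r+1,$$ and $$\text{(B)}\quad \min\ k\log\big(\sigma_r\{d(y_i,\mu;R,\{D_j\})\}\big)+\log\Big(\sum_{j=1}^m\lambda(B_{\|\cdot\|_{p_j}}(1))\det(D_j)^{-1}\Big)\quad\text{s.t.}\ R\in\mathrm{SO}(k),\ \mu\in\mathbb{R}^k,\ D_j\in\mathrm{Diag}(k),\ D_j\succcurlyeq 0,\ p_j>0\ \forall j\in[m].$$ Then problems (A) and (B) are equivale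nt.
   Context: $\mathrm{SO}(k)=\{R\in\mathbb{R}^{k\times k}: R^\top R=I,\ \det R=1\}$; $\mathrm{Diag}(k)$ is the set of diagonal $k\times k$ matrices. For $p>0$, $\|z\|_p=(\sum_j|z_j|^p)^{1/p}$ and $\lambda(B_{\|\cdot\|_p}(1))=\frac{2^k\Gamma(1+1/p)^k}{\Gamma(1+k/p)}$ is the Lebesgue measure of the unit $\|\cdot\|_p$-ball in $\mathbb{R}^k$. $\det(D)^{-1}$ is $+\infty$ for singular $D$. $\mathds{1}\{\cdot\}$ is the indicator function. For reals $a_1,\dots,a_n$, $\sigma_r\{a_i\}$ denotes the $r$-th largest of them. The quantity $V$ is the paper's definition of the volume of the multi-norm set $\{y: d(y,\mu;R,\{D_j\})\le 1\}$. *)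

theory Defs
  imports "HOL-Analysis.Analysis"
begin

definition lpnorm :: "real \<Rightarrow> real^'k \<Rightarrow> real" where
  "lpnorm p z = (\<Sum>i\<in>UNIV. \<bar>z $ i\<bar> powr p) powr (1 / p)"

text \<open>Lebesgue measure of the unit p-ball in R^k (closed form given in the paper).\<close>
definition ball_vol :: "real \<Rightarrow> nat \<Rightarrow> real" where
  "ball_vol p k = 2 ^ k * Gamma (1 + 1 / p) ^ k / Gamma (1 + real k / p)"

definition is_SO :: "real^'k^'k \<Rightarrow> bool" where
  "is_SO R \<longleftrightarrow> orthogonal_matrix R \<and> det R = 1"

definition is_diag :: "real^'k^'k \<Rightarrow> bool" where
  "is_diag D \<longleftrightarrow> (\<forall>i j. i \<noteq> j \<longrightarrow> D $ i $ j = 0)"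

definition psd :: "real^'k^'k \<Rightarrow> bool" where
  "psd D \<longleftrightarrow> (\<forall>x. 0 \<le> x \<bullet> (D *v x))"

definition inv_det :: "real^'k^'k \<Rightarrow> ereal" where
  "inv_det D = (if det D = 0 then \<infinity> else ereal (1 / det D))"

definition eln :: "ereal \<Rightarrow> ereal" where
  "eln x = (if x = \<infinity> then \<infinity> else if x \<le> 0 then -\<infinity> else ereal (ln (real_of_ereal x)))"

definition sigma_r :: "nat \<Rightarrow> real list \<Rightarrow> real" where
  "sigma_r r xs = rev (sort xs) ! (r - 1)"

text \<open>Multi-norm distance d(y, mu; R, {D_j}); regions and parameters indexed by j < m.\<close>
definition mdist :: "(nat \<Rightarrow> (real^'k) set) \<Rightarrow> nat \<Rightarrow> real^'k^'k \<Rightarrow> (nat \<Rightarrow> real^'k^'k)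
     \<Rightarrow> (nat \<Rightarrow> real) \<Rightarrow> real^'k \<Rightarrow> real^'k \<Rightarrow> real" where
  "mdist A m R D p mu y =
     (\<Sum>j<m. (if R *v (y - mu) \<in> A j then 1 else 0) * lpnorm (p j) (R *v (D j *v (y - mu))))"

definition vol_sum :: "nat \<Rightarrow> (nat \<Rightarrow> real) \<Rightarrow> (nat \<Rightarrow> real^'k^'k) \<Rightarrow> ereal" where
  "vol_sum m p D = (\<Sum>j<m. ereal (ball_vol (p j) CARD('k)) * inv_det (D j))"

definition volV :: "nat \<Rightarrow> (nat \<Rightarrow> real) \<Rightarrow> (nat \<Rightarrow> real^'k^'k) \<Rightarrow> ereal" where
  "volV m p D = ereal (1 / real m) * vol_sum m p D"

definition admissible :: "nat \<Rightarrow> real^'k^'k \<Rightarrow> (nat \<Rightarrow> real^'k^'k) \<Rightarrow> (nat \<Rightarrow> real) \<Rightarrow> bool" where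
  "admissible m R D p \<longleftrightarrow> is_SO R \<and> (\<forall>j<m. is_diag (D j) \<and> psd (D j) \<and> p j > 0)"

definition feasA :: "(nat \<Rightarrow> (real^'k) set) \<Rightarrow> nat \<Rightarrow> (nat \<Rightarrow> real^'k) \<Rightarrow> nat \<Rightarrow> nat
     \<Rightarrow> real^'k^'k \<Rightarrow> real^'k \<Rightarrow> (nat \<Rightarrow> real^'k^'k) \<Rightarrow> (nat \<Rightarrow> real) \<Rightarrow> bool" where
  "feasA A m y n r R mu D p \<longleftrightarrow> admissible m R D p \<and>
     n - r + 1 \<le> card {i. i < n \<and> mdist A m R D p mu (y i) \<le> 1}"

definition objB :: "(nat \<Rightarrow> (real^'k) set) \<Rightarrow> nat \<Rightarrow> (nat \<Rightarrow> real^'k) \<Rightarrow> nat \<Rightarrow> nat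
     \<Rightarrow> real^'k^'k \<Rightarrow> real^'k \<Rightarrow> (nat \<Rightarrow> real^'k^'k) \<Rightarrow> (nat \<Rightarrow> real) \<Rightarrow> ereal" where
  "objB A m y n r R mu D p =
     ereal (real CARD('k)) * eln (ereal (sigma_r r (map (\<lambda>i. mdist A m R D p mu (y i)) [0..<n])))
     + eln (vol_sum m p D)"

end

theory Submission
  imports Defs
begin

text \<open>
  Scaling all \<open>D\<^sub>j\<close> by \<open>c > 0\<close> multiplies every distance \<open>d(y\<^sub>i, \<mu>)\<close> by \<open>c\<close> and the volume
  sum by \<open>c\<^sup>-\<^sup>k\<close>, so the objective of (B) is scale invariant. If \<open>s = \<sigma>\<^sub>r{d(y\<^sub>i, \<mu>)} > 0\<close>,
  the matrices \<open>D\<^sub>j / s\<close> are feasible for (A), since at least \<open>n - r + 1\<close> distances are \<open>\<le> s\<close>,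
  and the objective of (B) is the log of their volume sum. Conversely a feasible point of (A)
  has \<open>s \<le> 1\<close>, so its objective in (B) is at most the log of its volume sum. If \<open>s = 0\<close>, the
  \<open>n - r + 1\<close> points at distance \<open>0\<close> stay there for every multiple of \<open>D\<close>, and blowing \<open>D\<close> up
  shows that the infimum of (A) is \<open>0\<close>. Finally \<open>ln\<close> is an order isomorphism from \<open>[0, \<infinity>]\<close>
  onto the extended reals, so it commutes with infima and maps minimizers to minimizers.
\<close>

section \<open>Scaling the shape matrices\<close>

lemma lpnorm_nonneg: "0 \<le> lpnorm p z"
  unfolding lpnorm_def by simp

lemma lpnorm_scaleR:
  assumes "0 < p" "0 \<le> c"
  shows "lpnorm p (c *\<^sub>R z) = c * lpnorm p z"
proof -
  have "(\<Sum>i\<in>UNIV. \<bar>(c *\<^sub>R z) $ i\<bar> powr p) = c powr p * (\<Sum>i\<in>UNIV. \<bar>z $ i\<bar> powr p)"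
    using assms by (simp add: abs_mult powr_mult sum_distrib_left)
  moreover have "(c powr p) powr (1 / p) = c"
    using assms by (simp add: powr_powr)
  ultimately show ?thesis
    unfolding lpnorm_def using assms by (simp add: powr_mult sum_nonneg)
qed

lemma mdist_scaleR:
  assumes "\<forall>j<m. 0 < p j" "0 \<le> c"
  shows "mdist A m R (\<lambda>j. c *\<^sub>R D j) p mu y = c * mdist A m R D p mu y"
  unfolding mdist_def sum_distrib_left using assms
  by (intro sum.cong) (auto simp: scaleR_matrix_vector_assoc[symmetric] matrix_vector_mult_scaleR lpnorm_scaleR)

lemma psd_diag_nonneg:
  assumes "psd D"
  shows "0 \<le> D $ i $ i"
proof -
  have "0 \<le> axis i 1 \<bullet> (D *v axis i 1)"
    using assms unfolding psd_def by blast
  moreover have "(D *v axis i 1) $ i = D $ i $ i"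
    by (simp add: matrix_vector_mult_def axis_def if_distrib[where f="\<lambda>x. _ * x"] cong: if_cong)
  ultimately show ?thesis
    by (simp add: inner_axis')
qed

lemma det_diag_psd_nonneg: "is_diag D \<Longrightarrow> psd D \<Longrightarrow> 0 \<le> det D"
  by (simp add: det_diagonal is_diag_def prod_nonneg psd_diag_nonneg)

lemma inv_det_diag_psd_pos: "is_diag D \<Longrightarrow> psd D \<Longrightarrow> 0 < inv_det D"
  using det_diag_psd_nonneg[of D] by (auto simp: inv_det_def)

lemma inv_det_scaleR:
  fixes D :: "real^'k^'k"
  assumes "is_diag D" "0 < c"
  shows "inv_det (c *\<^sub>R D) = ereal ((1 / c) ^ CARD('k)) * inv_det D"
proof -
  have "det (c *\<^sub>R D) = c ^ CARD('k) * det D"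
    using assms by (simp add: det_diagonal is_diag_def prod.distrib)
  then show ?thesis
    using assms by (auto simp: inv_det_def power_one_over)
qed

lemma ball_vol_pos: "0 < p \<Longrightarrow> 0 < ball_vol p k"
  unfolding ball_vol_def by (simp add: Gamma_real_pos add_pos_nonneg)

lemma admissible_scaleR:
  "admissible m R D p \<Longrightarrow> 0 < c \<Longrightarrow> admissible m R (\<lambda>j. c *\<^sub>R D j) p"
  unfolding admissible_def is_diag_def psd_def
  by (auto simp: scaleR_matrix_vector_assoc[symmetric])

lemma vol_sum_pos:
  fixes D :: "nat \<Rightarrow> real^'k^'k"
  assumes "admissible m R D p" "0 < m"
  shows "0 < vol_sum m p D"
proof -
  have terms: "0 < ereal (ball_vol (p j) CARD('k)) * inv_det (D j)" if "j < m" for j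
    using assms that by (simp add: admissible_def ereal_zero_less_0_iff ball_vol_pos inv_det_diag_psd_pos)
  have "0 < ereal (ball_vol (p 0) CARD('k)) * inv_det (D 0)"
    using terms assms(2) .
  also have "\<dots> \<le> vol_sum m p D"
    unfolding vol_sum_def using assms(2) terms
    by (intro sum_nonneg_leq_bound[where f="\<lambda>j. ereal (ball_vol (p j) CARD('k)) * inv_det (D j)"
          and i=0, OF _ _ refl]) (auto intro: less_imp_le)
  finally show ?thesis .
qed

lemma vol_sum_scaleR:
  fixes D :: "nat \<Rightarrow> real^'k^'k"
  assumes "admissible m R D p" "0 < c"
  shows "vol_sum m p (\<lambda>j. c *\<^sub>R D j) = ereal ((1 / c) ^ CARD('k)) * vol_sum m p D"
  unfolding vol_sum_def using assms
  by (subst sum_ereal_right_distrib)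
     (auto simp: admissible_def inv_det_scaleR mult_ac ball_vol_pos inv_det_diag_psd_pos less_imp_le)

lemma mult_volV: "0 < m \<Longrightarrow> ereal (real m) * volV m p D = vol_sum m p D"
  unfolding volV_def by (simp add: mult.assoc[symmetric])

section \<open>The \<open>r\<close>-th largest element\<close>

lemma length_filter_rev_sort: "length (filter P (rev (sort xs))) = length (filter P xs)"
  by (simp add: rev_filter[symmetric] filter_sort)

lemma sigma_r_in_set: "1 \<le> r \<Longrightarrow> r \<le> length xs \<Longrightarrow> sigma_r r xs \<in> set xs"
  unfolding sigma_r_def using nth_mem[of "r - 1" "rev (sort xs)"] by simp

lemma sigma_r_count_le:
  assumes "1 \<le> r" "r \<le> length xs"
  shows "length xs - r + 1 \<le> length (filter (\<lambda>x. x \<le> sigma_r r xs) xs)"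
proof -
  define L where "L = rev (sort xs)"
  have "{r - 1..<length xs} \<subseteq> {i. i < length L \<and> L ! i \<le> L ! (r - 1)}"
    using assms by (auto simp: L_def intro: sorted_rev_nth_mono)
  then have "card {r - 1..<length xs} \<le> card {i. i < length L \<and> L ! i \<le> L ! (r - 1)}"
    by (intro card_mono) auto
  then show ?thesis
    using assms length_filter_rev_sort[of "\<lambda>x. x \<le> L ! (r - 1)" xs]
    by (simp add: length_filter_conv_card sigma_r_def L_def)
qed

lemma sigma_r_count_ge:
  assumes "1 \<le> r" "r \<le> length xs"
  shows "r \<le> length (filter (\<lambda>x. sigma_r r xs \<le> x) xs)"
proof -
  define L where "L = rev (sort xs)"
  have "{..<r} \<subseteq> {i. i < length L \<and> L ! (r - 1) \<le> L ! i}"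
    using assms by (auto simp: L_def intro: sorted_rev_nth_mono)
  then have "card {..<r} \<le> card {i. i < length L \<and> L ! (r - 1) \<le> L ! i}"
    by (intro card_mono) auto
  then show ?thesis
    using assms length_filter_rev_sort[of "\<lambda>x. L ! (r - 1) \<le> x" xs]
    by (simp add: length_filter_conv_card sigma_r_def L_def)
qed

lemma sigma_r_le:
  assumes "1 \<le> r" "r \<le> length xs" "length xs - r + 1 \<le> length (filter (\<lambda>x. x \<le> b) xs)"
  shows "sigma_r r xs \<le> b"
proof (rule ccontr)
  assume "\<not> sigma_r r xs \<le> b"
  then have "filter (\<lambda>x. sigma_r r xs \<le> x) xs = filter (\<lambda>x. sigma_r r xs \<le> x) (filter (\<lambda>x. \<not> x \<le> b) xs)"
    by (auto simp: filter_filter intro: filter_cong)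
  then have "length (filter (\<lambda>x. sigma_r r xs \<le> x) xs) \<le> length (filter (\<lambda>x. \<not> x \<le> b) xs)"
    by (metis length_filter_le)
  then show False
    using assms sigma_r_count_ge[OF assms(1,2)] sum_length_filter_compl[of "\<lambda>x. x \<le> b" xs] by linarith
qed

lemma length_filter_map_upt: "length (filter P (map f [0..<n])) = card {i. i < n \<and> P (f i)}"
  by (simp add: length_filter_conv_card cong: conj_cong)

section \<open>The extended logarithm and infima\<close>

lemma eln_mono: "x \<le> y \<Longrightarrow> eln x \<le> eln y"
  by (cases x; cases y) (auto simp: eln_def)

lemma eln_le_iff: "0 \<le> x \<Longrightarrow> 0 \<le> y \<Longrightarrow> eln x \<le> eln y \<longleftrightarrow> x \<le> y"
  by (cases x; cases y) (auto simp: eln_def)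

lemma eln_inj: "0 \<le> x \<Longrightarrow> 0 \<le> y \<Longrightarrow> eln x = eln y \<Longrightarrow> x = y"
  by (metis eln_le_iff order_antisym order_refl)

lemma eln_surj: "\<exists>w\<ge>0. eln w = b"
proof (cases b)
  case (real z)
  then show ?thesis
    by (intro exI[of _ "ereal (exp z)"]) (simp add: eln_def)
qed (auto simp: eln_def intro: exI[of _ 0] exI[of _ \<infinity>])

lemma eln_mult: "0 < a \<Longrightarrow> 0 < x \<Longrightarrow> eln (ereal a * x) = ereal (ln a) + eln x"
  by (cases x) (auto simp: eln_def ln_mult not_le)

lemma eln_INF:
  assumes "\<And>x. x \<in> S \<Longrightarrow> 0 \<le> f x"
  shows "eln (INF x\<in>S. f x) = (INF x\<in>S. eln (f x))"
proof (rule antisym)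
  show "eln (INF x\<in>S. f x) \<le> (INF x\<in>S. eln (f x))"
    by (intro INF_greatest eln_mono INF_lower)
  obtain w where w: "0 \<le> w" "eln w = (INF x\<in>S. eln (f x))"
    using eln_surj by blast
  have "w \<le> f x" if "x \<in> S" for x
    using w that assms eln_le_iff[of w "f x"] INF_lower[OF that, of "\<lambda>x. eln (f x)"] by simp
  then have "w \<le> (INF x\<in>S. f x)"
    by (rule INF_greatest)
  then show "(INF x\<in>S. eln (f x)) \<le> eln (INF x\<in>S. f x)"
    using w by (metis eln_mono)
qed

lemma ereal_mult_INF:
  fixes f :: "'a \<Rightarrow> ereal"
  assumes "0 < c"
  shows "ereal c * (INF x\<in>S. f x) = (INF x\<in>S. ereal c * f x)"
proof -
  have "bij ((*) (ereal c))"
    using assms by (intro bij_betw_byWitness[of _ "\<lambda>x. x / ereal c"])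
      (auto simp: ereal_mult_divide ereal_divide_eq)
  moreover have "mono ((*) (ereal c))"
    using assms by (auto simp: mono_def intro: ereal_mult_left_mono)
  ultimately show ?thesis
    by (simp add: mono_bij_Inf image_image)
qed

lemma INF_eq_eln_INF:
  fixes obj vol :: "'a \<Rightarrow> ereal"
  assumes "F \<subseteq> X" and vol_nonneg: "\<forall>x\<in>F. 0 \<le> vol x"
    and upper: "\<forall>x\<in>F. obj x \<le> eln (vol x)"
    and lower: "\<forall>x\<in>X. eln (INF x\<in>F. vol x) \<le> obj x"
  shows "(INF x\<in>X. obj x) = eln (INF x\<in>F. vol x)"
    and "\<And>x. x \<in> F \<Longrightarrow> vol x = (INF x\<in>F. vol x) \<Longrightarrow> obj x = (INF x\<in>X. obj x)"
    and "\<And>x. x \<in> F \<Longrightarrow> eln (vol x) = (INF x\<in>X. obj x) \<Longrightarrow> vol x = (INF x\<in>F. vol x)"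
proof -
  have "(INF x\<in>X. obj x) \<le> (INF x\<in>F. obj x)"
    using \<open>F \<subseteq> X\<close> by (rule INF_superset_mono) simp
  also have "\<dots> \<le> (INF x\<in>F. eln (vol x))"
    using upper by (intro INF_mono) blast
  also have "\<dots> = eln (INF x\<in>F. vol x)"
    using vol_nonneg by (intro eln_INF[symmetric]) blast
  finally show inf_eq: "(INF x\<in>X. obj x) = eln (INF x\<in>F. vol x)"
    using lower by (intro antisym INF_greatest) auto
  show "obj x = (INF x\<in>X. obj x)" if "x \<in> F" "vol x = (INF x\<in>F. vol x)" for x
  proof (rule antisym)
    have "obj x \<le> eln (vol x)"
      using upper \<open>x \<in> F\<close> by blast
    then show "obj x \<le> (INF x\<in>X. obj x)"
      using that(2) inf_eq by simp
    show "(INF x\<in>X. obj x) \<le> obj x"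
      using \<open>x \<in> F\<close> \<open>F \<subseteq> X\<close> by (intro INF_lower) blast
  qed
  show "vol x = (INF x\<in>F. vol x)" if "x \<in> F" "eln (vol x) = (INF x\<in>X. obj x)" for x
  proof (rule eln_inj)
    show "0 \<le> vol x"
      using vol_nonneg \<open>x \<in> F\<close> by blast
    show "0 \<le> (INF x\<in>F. vol x)"
      using vol_nonneg by (intro INF_greatest) blast
    show "eln (vol x) = eln (INF x\<in>F. vol x)"
      using that(2) inf_eq by simp
  qed
qed

section \<open>Comparing the two problems\<close>

abbreviation sigma_r_dist ::
    "(nat \<Rightarrow> (real^'k) set) \<Rightarrow> nat \<Rightarrow> (nat \<Rightarrow> real^'k) \<Rightarrow> nat \<Rightarrow> nat
     \<Rightarrow> real^'k^'k \<Rightarrow> real^'k \<Rightarrow> (nat \<Rightarrow> real^'k^'k) \<Rightarrow> (nat \<Rightarrow> real) \<Rightarrow> real" where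
  "sigma_r_dist A m y n r R mu D p \<equiv> sigma_r r (map (\<lambda>i. mdist A m R D p mu (y i)) [0..<n])"

lemma sigma_r_dist_nonneg:
  assumes "1 \<le> r" "r \<le> n"
  shows "0 \<le> sigma_r_dist A m y n r R mu D p"
proof -
  have "0 \<le> mdist A m R D p mu (y i)" for i
    unfolding mdist_def by (intro sum_nonneg) (simp add: lpnorm_nonneg)
  then show ?thesis
    using sigma_r_in_set[of r "map (\<lambda>i. mdist A m R D p mu (y i)) [0..<n]"] assms by auto
qed

lemma feasA_normalize:
  assumes r: "1 \<le> r" "r \<le> n" and adm: "admissible m R D p"
    and s: "s = sigma_r_dist A m y n r R mu D p" "0 < s"
  shows "feasA A m y n r R mu (\<lambda>j. (1 / s) *\<^sub>R D j) p"
proof -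
  have "mdist A m R (\<lambda>j. (1 / s) *\<^sub>R D j) p mu (y i) \<le> 1 \<longleftrightarrow> mdist A m R D p mu (y i) \<le> s" for i
    using adm s(2) by (simp add: mdist_scaleR admissible_def field_simps)
  moreover have "n - r + 1 \<le> card {i. i < n \<and> mdist A m R D p mu (y i) \<le> s}"
    using sigma_r_count_le[of r "map (\<lambda>i. mdist A m R D p mu (y i)) [0..<n]"] r s
    unfolding length_filter_map_upt by simp
  ultimately show ?thesis
    using adm s by (simp add: feasA_def admissible_scaleR)
qed

lemma objB_eq_eln_normalized:
  fixes D :: "nat \<Rightarrow> real^'k^'k"
  assumes "0 < m" and adm: "admissible m R D p"
    and s: "s = sigma_r_dist A m y n r R mu D p" "0 < s"
  shows "objB A m y n r R mu D p = eln (vol_sum m p (\<lambda>j. (1 / s) *\<^sub>R D j))"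
proof -
  have "vol_sum m p (\<lambda>j. (1 / s) *\<^sub>R D j) = ereal (s ^ CARD('k)) * vol_sum m p D"
    using assms by (simp add: vol_sum_scaleR)
  then have "eln (vol_sum m p (\<lambda>j. (1 / s) *\<^sub>R D j))
      = ereal (real CARD('k) * ln s) + eln (vol_sum m p D)"
    using assms by (simp add: eln_mult vol_sum_pos ln_realpow)
  also have "\<dots> = objB A m y n r R mu D p"
    unfolding objB_def using s by (simp add: eln_def)
  finally show ?thesis ..
qed

lemma objB_le_eln_vol_sum:
  fixes D :: "nat \<Rightarrow> real^'k^'k"
  assumes r: "1 \<le> r" "r \<le> n" and feas: "feasA A m y n r R mu D p"
  shows "objB A m y n r R mu D p \<le> eln (vol_sum m p D)"
proof -
  let ?s = "sigma_r_dist A m y n r R mu D p"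
  have "n - r + 1 \<le> card {i. i < n \<and> mdist A m R D p mu (y i) \<le> 1}"
    using feas by (simp add: feasA_def)
  then have "?s \<le> 1"
    using sigma_r_le[of r "map (\<lambda>i. mdist A m R D p mu (y i)) [0..<n]" 1] r
    unfolding length_filter_map_upt by simp
  then have "ereal (real CARD('k)) * eln (ereal ?s) \<le> 0"
    using sigma_r_dist_nonneg[OF r] by (auto simp: eln_def mult_nonneg_nonpos)
  then have "objB A m y n r R mu D p \<le> 0 + eln (vol_sum m p D)"
    unfolding objB_def by (rule add_right_mono)
  then show ?thesis
    by simp
qed

lemma feasA_scaleR_if_sigma_r_dist_zero:
  assumes r: "1 \<le> r" "r \<le> n" and adm: "admissible m R D p"
    and s: "sigma_r_dist A m y n r R mu D p = 0" and "0 < c"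
  shows "feasA A m y n r R mu (\<lambda>j. c *\<^sub>R D j) p"
proof -
  have "n - r + 1 \<le> card {i. i < n \<and> mdist A m R D p mu (y i) \<le> 0}"
    using sigma_r_count_le[of r "map (\<lambda>i. mdist A m R D p mu (y i)) [0..<n]"] r s
    unfolding length_filter_map_upt by simp
  also have "\<dots> \<le> card {i. i < n \<and> mdist A m R (\<lambda>j. c *\<^sub>R D j) p mu (y i) \<le> 1}"
  proof (intro card_mono subsetI)
    fix i
    assume "i \<in> {i. i < n \<and> mdist A m R D p mu (y i) \<le> 0}"
    then have "c * mdist A m R D p mu (y i) \<le> 0"
      using \<open>0 < c\<close> by (simp add: mult_nonneg_nonpos)
    then show "i \<in> {i. i < n \<and> mdist A m R (\<lambda>j. c *\<^sub>R D j) p mu (y i) \<le> 1}"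
      using \<open>i \<in> _\<close> adm \<open>0 < c\<close> by (simp add: mdist_scaleR admissible_def)
  qed simp
  finally show ?thesis
    using adm \<open>0 < c\<close> by (simp add: feasA_def admissible_scaleR)
qed

lemma INF_vol_sum_nonpos_if_sigma_r_dist_zero:
  fixes D :: "nat \<Rightarrow> real^'k^'k"
  assumes r: "1 \<le> r" "r \<le> n" and m: "0 < m" and adm: "admissible m R D p"
    and s: "sigma_r_dist A m y n r R mu D p = 0" and fin: "vol_sum m p D = ereal v"
  shows "(INF x\<in>{(R, mu, D, p). feasA A m y n r R mu D p}. case x of (R, mu, D, p) \<Rightarrow> vol_sum m p D)
         \<le> 0"
    (is "?inf \<le> 0")
proof (rule ereal_le_epsilon2)
  fix e :: real
  assume "0 < e"
  have "0 < v"
    using vol_sum_pos[OF adm m] fin by simp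
  define c where "c = v / e + 1"
  have "1 \<le> c"
    using \<open>0 < v\<close> \<open>0 < e\<close> by (simp add: c_def)
  have "v / c ^ CARD('k) \<le> v / c"
    using \<open>0 < v\<close> \<open>1 \<le> c\<close> by (intro divide_left_mono self_le_power) auto
  also have "v / c \<le> e"
    using \<open>0 < v\<close> \<open>0 < e\<close> \<open>1 \<le> c\<close> by (simp add: c_def field_simps)
  finally have "v / c ^ CARD('k) \<le> e" .
  have "?inf \<le> vol_sum m p (\<lambda>j. c *\<^sub>R D j)"
    using feasA_scaleR_if_sigma_r_dist_zero[OF r adm s, of c] \<open>1 \<le> c\<close>
    by (intro INF_lower2[of "(R, mu, \<lambda>j. c *\<^sub>R D j, p)"]) auto
  also have "\<dots> = ereal (v / c ^ CARD('k))"
    using adm \<open>1 \<le> c\<close> fin by (simp add: vol_sum_scaleR power_one_over)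
  also have "\<dots> \<le> ereal e"
    using \<open>v / c ^ CARD('k) \<le> e\<close> by simp
  finally show "?inf \<le> 0 + ereal e"
    by simp
qed

lemma eln_INF_vol_sum_le_objB:
  fixes D :: "nat \<Rightarrow> real^'k^'k"
  assumes r: "1 \<le> r" "r \<le> n" and m: "0 < m" and adm: "admissible m R D p"
  shows "eln (INF x\<in>{(R, mu, D, p). feasA A m y n r R mu D p}. case x of (R, mu, D, p) \<Rightarrow> vol_sum m p D)
         \<le> objB A m y n r R mu D p"
    (is "eln ?inf \<le> _")
proof -
  let ?s = "sigma_r_dist A m y n r R mu D p"
  have "0 \<le> ?s"
    by (rule sigma_r_dist_nonneg[OF r])
  then consider "0 < ?s" | "?s = 0" "vol_sum m p D = \<infinity>" | x where "?s = 0" "vol_sum m p D = ereal x"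
    using vol_sum_pos[OF adm m] by (cases "vol_sum m p D") force+
  then show ?thesis
  proof cases
    case 1
    have "?inf \<le> vol_sum m p (\<lambda>j. (1 / ?s) *\<^sub>R D j)"
      using feasA_normalize[OF r adm refl 1]
      by (intro INF_lower2[of "(R, mu, \<lambda>j. (1 / ?s) *\<^sub>R D j, p)"]) auto
    then show ?thesis
      using objB_eq_eln_normalized[OF m adm refl 1] by (simp add: eln_mono)
  next
    case 2
    \<comment> \<open>in \<open>ereal\<close>, \<open>-\<infinity> + \<infinity> = \<infinity>\<close>\<close>
    then show ?thesis
      by (simp add: objB_def eln_def)
  next
    case (3 x)
    then have "eln ?inf \<le> eln 0"
      using INF_vol_sum_nonpos_if_sigma_r_dist_zero[OF r m adm] by (intro eln_mono) blast
    then show ?thesis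
      by (simp add: eln_def)
  qed
qed

lemma objB_vol_sum_bounds:
  fixes y :: "nat \<Rightarrow> real^'k" and A :: "nat \<Rightarrow> (real^'k) set" and n m r :: nat
  assumes r: "1 \<le> r" "r \<le> n" and m: "0 < m"
  defines "F \<equiv> {(R, mu, D, p). feasA A m y n r R mu D p}"
    and "vol \<equiv> \<lambda>(R, mu, D, p). vol_sum m p D"
    and "obj \<equiv> \<lambda>(R, mu, D, p). objB A m y n r R mu D p"
  shows "F \<subseteq> {(R, mu, D, p). admissible m R D p}"
    and "\<forall>x\<in>F. 0 \<le> vol x"
    and "\<forall>x\<in>F. obj x \<le> eln (vol x)"
    and "\<forall>x\<in>{(R, mu, D, p). admissible m R D p}. eln (INF x\<in>F. vol x) \<le> obj x"
proof -
  show "F \<subseteq> {(R, mu, D, p). admissible m R D p}"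
    by (auto simp: F_def feasA_def)
  show "\<forall>x\<in>F. 0 \<le> vol x"
    using m by (auto simp: F_def vol_def feasA_def intro: less_imp_le vol_sum_pos)
  show "\<forall>x\<in>F. obj x \<le> eln (vol x)"
    using r by (auto simp: F_def vol_def obj_def intro: objB_le_eln_vol_sum)
  show "\<forall>x\<in>{(R, mu, D, p). admissible m R D p}. eln (INF x\<in>F. vol x) \<le> obj x"
    using r m unfolding F_def vol_def obj_def by (auto intro: eln_INF_vol_sum_le_objB)
qed

theorem proposition2:
  fixes y :: "nat \<Rightarrow> real^'k" and A :: "nat \<Rightarrow> (real^'k) set" and n m r :: nat
  assumes r_ge: "1 \<le> r" and r_le: "r \<le> n"
    and disj: "\<forall>i<m. \<forall>j<m. i \<noteq> j \<longrightarrow> A i \<inter> A j = {}"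
    and cover: "(\<Union>j<m. A j) = UNIV"
  defines "valA \<equiv> INF x \<in> {(R, mu, D, p). feasA A m y n r R mu D p}.
                    (case x of (R, mu, D, p) \<Rightarrow> volV m p D)"
    and "valB \<equiv> INF x \<in> {(R, mu, D, p). admissible m R D p}.
                    (case x of (R, mu, D, p) \<Rightarrow> objB A m y n r R mu D p)"
  shows "valB = eln (ereal (real m) * valA)
    \<and> (\<forall>R mu D p. feasA A m y n r R mu D p \<and> volV m p D = valA
          \<longrightarrow> admissible m R D p \<and> objB A m y n r R mu D p = valB)
    \<and> (\<forall>R mu D p. admissible m R D p \<and> objB A m y n r R mu D p = valB
          \<and> sigma_r r (map (\<lambda>i. mdist A m R D p mu (y i)) [0..<n]) > 0
          \<longrightarrow> (let s = sigma_r r (map (\<lambda>i. mdist A m R D p mu (y i)) [0..<n])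
               in feasA A m y n r R mu (\<lambda>j. (1 / s) *\<^sub>R D j) p
                  \<and> volV m p (\<lambda>j. (1 / s) *\<^sub>R D j) = valA))"
proof -
  \<comment> \<open>The covering hypothesis only excludes \<open>m = 0\<close>.\<close>
  have m: "0 < m"
    using cover by (intro gr0I) auto
  have m_valA: "(INF x\<in>{(R, mu, D, p). feasA A m y n r R mu D p}. case x of (R, mu, D, p) \<Rightarrow> vol_sum m p D)
      = ereal (real m) * valA"
    unfolding valA_def using m by (simp add: ereal_mult_INF mult_volV case_prod_unfold)
  note equiv = INF_eq_eln_INF[OF objB_vol_sum_bounds[OF r_ge r_le m, where A = A and y = y],
      folded valB_def, unfolded m_valA]
  have "admissible m R D p \<and> objB A m y n r R mu D p = valB"
    if feas: "feasA A m y n r R mu D p" and min: "volV m p D = valA" for R mu D p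
    using equiv(2)[of "(R, mu, D, p)"] feas min m by (simp add: feasA_def mult_volV[symmetric])
  moreover have "feasA A m y n r R mu (\<lambda>j. (1 / s) *\<^sub>R D j) p \<and> volV m p (\<lambda>j. (1 / s) *\<^sub>R D j) = valA"
    if adm: "admissible m R D p" and min: "objB A m y n r R mu D p = valB"
      and s: "s = sigma_r_dist A m y n r R mu D p" "0 < s" for R mu D p s
  proof
    show feas: "feasA A m y n r R mu (\<lambda>j. (1 / s) *\<^sub>R D j) p"
      by (rule feasA_normalize[OF r_ge r_le adm s])
    have "vol_sum m p (\<lambda>j. (1 / s) *\<^sub>R D j) = ereal (real m) * valA"
      using equiv(3)[of "(R, mu, \<lambda>j. (1 / s) *\<^sub>R D j, p)"] feas min
        objB_eq_eln_normalized[OF m adm s] by simp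
    then show "volV m p (\<lambda>j. (1 / s) *\<^sub>R D j) = valA"
      using m by (simp add: mult_volV[symmetric] ereal_mult_cancel_left)
  qed
  ultimately show ?thesis
    using equiv(1) unfolding Let_def by blast
qed

end
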